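(* Let $g,h\in G(\Gamma)$ and $v\in\Gamma$, and suppose $h$ does not end with $G(\mathrm{lk}(v))$. (1) If $h^{-1}$ begins with $G_v$ but $h^{-1}g$ does not begin with $G_v$, then there is a reduced word $g\equiv g_1\cdots g_n$ and some $m\le n$ such that $h\equiv g_1\cdots g_m$ and $g_m\in G_v$. (2) If $h^{-1}g$ begins with $G_v$ but $h^{-1}$ does not begin with $G_v$, then there is a reduced word $g\equiv g_1\cdots g_n$ and some $m<n$ such that $h\equiv g_1\cdots g_m$ and $g_{m+1}\in G_v$.
   Context: $G(\Gamma)$ is the graph product of groups $\{G_v\}_{v\in\Gamma}$ over a finite simplicial graph $\Gamma$ (the quotient of $\ast_vG_v$ by the normal subgroup generated by $[G_v,G_w]$ for edges $[vw]$). $\mathrm{lk}(v)$ is the set of vertices adjacent to $v$. Words, syllables, shuffles and reduced words are as usual for graph products: a word $(g_1,\dots,g_n)$, $g_i\in G_{v_i}$, is reduced if it cannot be shortened by swapping consecutive syllables from adjacent vertex groups, merging consecutive syllables from the same vertex group, or deleting identity syllables; $g\equiv g_1\cdots g_n$ means this is a reduced word for $g$, and reduced words of $g$ differ by shuffles. An element $g$ begins (resp. ends) with $G_v$ if some reduced word for $g$ has its first (resp. last) syllable in $G_v$; $g$ ends with $G(\mathrm{lk}(v))$ if some reduced word for $g$ has its last syllable in $G_w$ for some $w\in\mathrm{lk}(v)$. *)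

theory Defs
  imports "HOL-Algebra.Group"
begin

text \<open>Graph product G(Gamma) over a finite simplicial graph with vertex set V and
adjacency E, vertex groups G v.  Elements are represented by words: lists of
syllables (v, x) with v in V and x in carrier (G v).  Two words represent the same
element iff they are related by the equivalence generated by the elementary moves
(swap adjacent syllables of adjacent vertices, merge syllables of the same vertex,
delete identity syllables).  Multiplication is concatenation.\<close>

type_synonym ('v, 'a) word = "('v \<times> 'a) list"

definition word_ok :: "'v set \<Rightarrow> ('v \<Rightarrow> 'a monoid) \<Rightarrow> ('v, 'a) word \<Rightarrow> bool" where
  "word_ok V G w \<longleftrightarrow> (\<forall>p \<in> set w. fst p \<in> V \<and> snd p \<in> carrier (G (fst p)))"

definition swap_step :: "'v set \<Rightarrow> ('v \<Rightarrow> 'v \<Rightarrow> bool) \<Rightarrow> ('v \<Rightarrow> 'a monoid)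
    \<Rightarrow> ('v, 'a) word \<Rightarrow> ('v, 'a) word \<Rightarrow> bool" where
  "swap_step V E G w w' \<longleftrightarrow> word_ok V G w \<and>
     (\<exists>xs ys u a v b. E u v \<and> w = xs @ [(u,a),(v,b)] @ ys \<and> w' = xs @ [(v,b),(u,a)] @ ys)"

definition shorten_step :: "'v set \<Rightarrow> ('v \<Rightarrow> 'a monoid)
    \<Rightarrow> ('v, 'a) word \<Rightarrow> ('v, 'a) word \<Rightarrow> bool" where
  "shorten_step V G w w' \<longleftrightarrow> word_ok V G w \<and>
     ((\<exists>xs ys v a b. w = xs @ [(v,a),(v,b)] @ ys \<and> w' = xs @ [(v, a \<otimes>\<^bsub>G v\<^esub> b)] @ ys)
      \<or> (\<exists>xs ys v. w = xs @ [(v, \<one>\<^bsub>G v\<^esub>)] @ ys \<and> w' = xs @ ys))"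

definition elem_step :: "'v set \<Rightarrow> ('v \<Rightarrow> 'v \<Rightarrow> bool) \<Rightarrow> ('v \<Rightarrow> 'a monoid)
    \<Rightarrow> ('v, 'a) word \<Rightarrow> ('v, 'a) word \<Rightarrow> bool" where
  "elem_step V E G w w' \<longleftrightarrow> swap_step V E G w w' \<or> shorten_step V G w w'"

definition gp_eq :: "'v set \<Rightarrow> ('v \<Rightarrow> 'v \<Rightarrow> bool) \<Rightarrow> ('v \<Rightarrow> 'a monoid)
    \<Rightarrow> ('v, 'a) word \<Rightarrow> ('v, 'a) word \<Rightarrow> bool" where
  "gp_eq V E G = (\<lambda>w w'. elem_step V E G w w' \<or> elem_step V E G w' w)\<^sup>*\<^sup>*"

definition reduced :: "'v set \<Rightarrow> ('v \<Rightarrow> 'v \<Rightarrow> bool) \<Rightarrow> ('v \<Rightarrow> 'a monoid)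
    \<Rightarrow> ('v, 'a) word \<Rightarrow> bool" where
  "reduced V E G w \<longleftrightarrow> word_ok V G w \<and>
     (\<forall>w'. (swap_step V E G)\<^sup>*\<^sup>* w w' \<longrightarrow> \<not> (\<exists>w''. shorten_step V G w' w''))"

definition inv_word :: "('v \<Rightarrow> 'a monoid) \<Rightarrow> ('v, 'a) word \<Rightarrow> ('v, 'a) word" where
  "inv_word G w = rev (map (\<lambda>p. (fst p, inv\<^bsub>G (fst p)\<^esub> (snd p))) w)"

definition begins_with :: "'v set \<Rightarrow> ('v \<Rightarrow> 'v \<Rightarrow> bool) \<Rightarrow> ('v \<Rightarrow> 'a monoid)
    \<Rightarrow> ('v, 'a) word \<Rightarrow> 'v \<Rightarrow> bool" where
  "begins_with V E G w v \<longleftrightarrow>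
     (\<exists>w'. gp_eq V E G w w' \<and> reduced V E G w' \<and> w' \<noteq> [] \<and> fst (hd w') = v)"

definition ends_with_link :: "'v set \<Rightarrow> ('v \<Rightarrow> 'v \<Rightarrow> bool) \<Rightarrow> ('v \<Rightarrow> 'a monoid)
    \<Rightarrow> ('v, 'a) word \<Rightarrow> 'v \<Rightarrow> bool" where
  "ends_with_link V E G w v \<longleftrightarrow>
     (\<exists>w'. gp_eq V E G w w' \<and> reduced V E G w' \<and> w' \<noteq> [] \<and> E v (fst (last w')))"

end

theory Submission
  imports Defs
begin

text \<open>Write h and h\<inverse>g as reduced words x and y; then x y is a word for g. By the normal
form theorem, a word is reduced iff it has no identity syllables and no two syllables of the
same vertex u separated only by syllables from G(lk(u)). Hence x y fails to be reduced only if
some vertex u has a syllable of x that shuffles to its end and a syllable of y that shuffles to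
its front, i.e. h ends with G_u and h\<inverse>g begins with G_u. In (1) take x ending in G_v:
u = v contradicts that h\<inverse>g does not begin with G_v, and u \<noteq> v puts u in lk(v), so h would
end with G(lk(v)). In (2) take y beginning with G_v: u = v makes h end with G_v, i.e. h\<inverse>
begin with G_v, and u \<noteq> v again puts u in lk(v). So x y is reduced, and x is its prefix.\<close>

section \<open>Words, shuffles and equality in the graph product\<close>

lemma word_ok_Nil [simp]: "word_ok V G []"
  unfolding word_ok_def by simp

lemma word_ok_Cons [simp]:
  "word_ok V G (p # w) \<longleftrightarrow> fst p \<in> V \<and> snd p \<in> carrier (G (fst p)) \<and> word_ok V G w"
  unfolding word_ok_def by auto

lemma word_ok_append [simp]: "word_ok V G (xs @ ys) \<longleftrightarrow> word_ok V G xs \<and> word_ok V G ys"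
  unfolding word_ok_def by auto

lemma swaps_preserve_set_length:
  "(swap_step V E G)\<^sup>*\<^sup>* w w' \<Longrightarrow> set w' = set w \<and> length w' = length w"
proof (induction rule: rtranclp_induct)
  case (step y z)
  then obtain xs ys u a v b where "y = xs @ [(u,a),(v,b)] @ ys" "z = xs @ [(v,b),(u,a)] @ ys"
    unfolding swap_step_def by blast
  then have "set z = set y \<and> length z = length y" by auto
  with step.IH show ?case by simp
qed simp

lemma swaps_word_ok: "(swap_step V E G)\<^sup>*\<^sup>* w w' \<Longrightarrow> word_ok V G w' \<longleftrightarrow> word_ok V G w"
  using swaps_preserve_set_length unfolding word_ok_def by metis

lemma reduced_swaps: "reduced V E G w \<Longrightarrow> (swap_step V E G)\<^sup>*\<^sup>* w w' \<Longrightarrow> reduced V E G w'"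
  unfolding reduced_def using swaps_word_ok rtranclp_trans by metis

lemma gp_eq_refl: "gp_eq V E G w w"
  unfolding gp_eq_def by simp

lemma gp_eq_trans [trans]: "gp_eq V E G w w' \<Longrightarrow> gp_eq V E G w' w'' \<Longrightarrow> gp_eq V E G w w''"
  unfolding gp_eq_def by (rule rtranclp_trans)

lemma gp_eq_sym: "gp_eq V E G w w' \<Longrightarrow> gp_eq V E G w' w"
  unfolding gp_eq_def
proof (induction rule: rtranclp_induct)
  case (step y z)
  then show ?case by (metis (no_types, lifting) converse_rtranclp_into_rtranclp)
qed simp

lemma gp_eq_if_elem_step: "elem_step V E G w w' \<Longrightarrow> gp_eq V E G w w'"
  unfolding gp_eq_def by (simp add: r_into_rtranclp)

lemma gp_eq_if_swaps: "(swap_step V E G)\<^sup>*\<^sup>* w w' \<Longrightarrow> gp_eq V E G w w'"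
proof (induction rule: rtranclp_induct)
  case (step y z)
  then show ?case using gp_eq_trans gp_eq_if_elem_step unfolding elem_step_def by metis
qed (rule gp_eq_refl)

lemma gp_eq_map:
  assumes "\<And>w w'. elem_step V E G w w' \<Longrightarrow> elem_step V E G (F w) (F w')"
    and "gp_eq V E G w w'"
  shows "gp_eq V E G (F w) (F w')"
  using assms(2) unfolding gp_eq_def
proof (induction rule: rtranclp_induct)
  case (step y z)
  then show ?case using assms(1) by (metis (mono_tags, lifting) rtranclp.rtrancl_into_rtrancl)
qed simp

lemma swap_step_append_cong:
  assumes "word_ok V G pre" "word_ok V G suf" "swap_step V E G w w'"
  shows "swap_step V E G (pre @ w @ suf) (pre @ w' @ suf)"
proof -
  from assms(3) obtain xs ys u a v b where "word_ok V G w" "E u v"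
    "w = xs @ [(u,a),(v,b)] @ ys" "w' = xs @ [(v,b),(u,a)] @ ys"
    unfolding swap_step_def by blast
  with assms(1,2) show ?thesis
    unfolding swap_step_def by (intro conjI exI[of _ "pre @ xs"] exI[of _ "ys @ suf"]) auto
qed

lemma shorten_step_append_cong:
  assumes "word_ok V G pre" "word_ok V G suf" "shorten_step V G w w'"
  shows "shorten_step V G (pre @ w @ suf) (pre @ w' @ suf)"
proof -
  have ok: "word_ok V G w" using assms(3) unfolding shorten_step_def by blast
  from assms(3) consider
      (merge) xs ys v a b where "w = xs @ [(v,a),(v,b)] @ ys" "w' = xs @ [(v, a \<otimes>\<^bsub>G v\<^esub> b)] @ ys"
    | (delete) xs ys v where "w = xs @ [(v, \<one>\<^bsub>G v\<^esub>)] @ ys" "w' = xs @ ys"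
    unfolding shorten_step_def by blast
  then show ?thesis
  proof cases
    case merge
    with assms(1,2) ok show ?thesis unfolding shorten_step_def
      by (intro conjI disjI1 exI[of _ "pre @ xs"] exI[of _ "ys @ suf"]) auto
  next
    case delete
    with assms(1,2) ok show ?thesis unfolding shorten_step_def
      by (intro conjI disjI2 exI[of _ "pre @ xs"] exI[of _ "ys @ suf"]) auto
  qed
qed

lemma gp_eq_append_cong:
  "word_ok V G pre \<Longrightarrow> word_ok V G suf \<Longrightarrow> gp_eq V E G w w' \<Longrightarrow>
   gp_eq V E G (pre @ w @ suf) (pre @ w' @ suf)"
  using gp_eq_map[of V E G "\<lambda>w. pre @ w @ suf"] swap_step_append_cong shorten_step_append_cong
  unfolding elem_step_def by metis

lemma swaps_move_to_front:
  "word_ok V G (pre @ mid @ p # ys) \<Longrightarrow> \<forall>q\<in>set mid. E (fst q) (fst p) \<Longrightarrow>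
   (swap_step V E G)\<^sup>*\<^sup>* (pre @ mid @ p # ys) (pre @ p # mid @ ys)"
proof (induction mid arbitrary: ys rule: rev_induct)
  case (snoc x mid)
  have "swap_step V E G (pre @ mid @ x # p # ys) (pre @ mid @ p # x # ys)"
    unfolding swap_step_def using snoc.prems
    by (intro conjI exI[of _ "pre @ mid"] exI[of _ ys] exI[of _ "fst x"] exI[of _ "snd x"]
        exI[of _ "fst p"] exI[of _ "snd p"]) auto
  moreover have "(swap_step V E G)\<^sup>*\<^sup>* (pre @ mid @ p # x # ys) (pre @ p # mid @ x # ys)"
    using snoc.IH[of "x # ys"] snoc.prems by auto
  ultimately show ?case by (simp add: converse_rtranclp_into_rtranclp)
qed simp

lemma swaps_move_to_end:
  "word_ok V G (pre @ p # mid) \<Longrightarrow> \<forall>q\<in>set mid. E (fst p) (fst q) \<Longrightarrow>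
   (swap_step V E G)\<^sup>*\<^sup>* (pre @ p # mid) (pre @ mid @ [p])"
proof (induction mid arbitrary: pre)
  case (Cons x mid)
  have "swap_step V E G (pre @ p # x # mid) ((pre @ [x]) @ p # mid)"
    unfolding swap_step_def using Cons.prems
    by (intro conjI exI[of _ pre] exI[of _ mid] exI[of _ "fst p"] exI[of _ "snd p"]
        exI[of _ "fst x"] exI[of _ "snd x"]) auto
  moreover have "(swap_step V E G)\<^sup>*\<^sup>* ((pre @ [x]) @ p # mid) ((pre @ [x]) @ mid @ [p])"
    using Cons.IH[of "pre @ [x]"] Cons.prems by auto
  ultimately show ?case by (simp add: converse_rtranclp_into_rtranclp)
qed simp

lemma reduced_move_to_end:
  assumes "reduced V E G x" "x = pre @ (u,a) # post" "\<forall>q\<in>set post. E u (fst q)"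
  shows "reduced V E G (pre @ post @ [(u,a)]) \<and> gp_eq V E G x (pre @ post @ [(u,a)])"
proof -
  have "word_ok V G x" using assms(1) unfolding reduced_def by blast
  then have "(swap_step V E G)\<^sup>*\<^sup>* x (pre @ post @ [(u,a)])"
    using swaps_move_to_end[of V G pre "(u,a)" post E] assms(2,3) by simp
  then show ?thesis using reduced_swaps assms(1) gp_eq_if_swaps by blast
qed

lemma ends_with_link_if_movable:
  assumes "reduced V E G x" "gp_eq V E G w x" "x = pre @ (u,a) # post" "\<forall>q\<in>set post. E u (fst q)"
    and "E v u"
  shows "ends_with_link V E G w v"
  using reduced_move_to_end[OF assms(1,3,4)] assms(2,5) gp_eq_trans unfolding ends_with_link_def
  by (intro exI[of _ "pre @ post @ [(u,a)]"]) auto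

section \<open>The normal form of reduced words\<close>

text \<open>Scanning recursive versions of the two obstructions; unlike their existential forms
(\<open>movable_to_front_iff\<close>, \<open>has_mergeable_pair_iff\<close>) they are visibly invariant under swaps.\<close>

fun movable_to_front :: "('v \<Rightarrow> 'v \<Rightarrow> bool) \<Rightarrow> 'v \<Rightarrow> ('v, 'a) word \<Rightarrow> bool" where
  "movable_to_front E u [] = False"
| "movable_to_front E u (p # w) = (if E u (fst p) then movable_to_front E u w else fst p = u)"

fun has_mergeable_pair :: "('v \<Rightarrow> 'v \<Rightarrow> bool) \<Rightarrow> ('v, 'a) word \<Rightarrow> bool" where
  "has_mergeable_pair E [] = False"
| "has_mergeable_pair E (p # w) = (movable_to_front E (fst p) w \<or> has_mergeable_pair E w)"

definition normal_word :: "'v set \<Rightarrow> ('v \<Rightarrow> 'v \<Rightarrow> bool) \<Rightarrow> ('v \<Rightarrow> 'a monoid) \<Rightarrow> ('v, 'a) word \<Rightarrow> bool"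
  where "normal_word V E G w \<longleftrightarrow>
    word_ok V G w \<and> (\<forall>p\<in>set w. snd p \<noteq> \<one>\<^bsub>G (fst p)\<^esub>) \<and> \<not> has_mergeable_pair E w"

lemma movable_to_front_iff:
  assumes "\<not> E u u"
  shows "movable_to_front E u w \<longleftrightarrow> (\<exists>mid b ys. w = mid @ (u,b) # ys \<and> (\<forall>q\<in>set mid. E u (fst q)))"
proof
  show "movable_to_front E u w \<Longrightarrow> \<exists>mid b ys. w = mid @ (u,b) # ys \<and> (\<forall>q\<in>set mid. E u (fst q))"
  proof (induction w)
    case (Cons p w)
    show ?case
    proof (cases "E u (fst p)")
      case True
      with Cons obtain mid b ys where "w = mid @ (u,b) # ys" "\<forall>q\<in>set mid. E u (fst q)" by auto
      with True show ?thesis by (intro exI[of _ "p # mid"]) auto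
    next
      case False
      with Cons.prems have "fst p = u" by simp
      then show ?thesis by (intro exI[of _ "[]"] exI[of _ "snd p"] exI[of _ w]) auto
    qed
  qed simp
  show "\<exists>mid b ys. w = mid @ (u,b) # ys \<and> (\<forall>q\<in>set mid. E u (fst q)) \<Longrightarrow> movable_to_front E u w"
  proof (elim exE conjE)
    fix mid b ys
    show "\<forall>q\<in>set mid. E u (fst q) \<Longrightarrow> w = mid @ (u,b) # ys \<Longrightarrow> movable_to_front E u w"
      using assms by (induction mid arbitrary: w) auto
  qed
qed

lemma movable_to_front_append:
  "movable_to_front E u (xs @ ys) \<Longrightarrow>
   movable_to_front E u xs \<or> (\<forall>q\<in>set xs. E u (fst q)) \<and> movable_to_front E u ys"
  by (induction xs) (auto split: if_splits)

lemma movable_to_front_map: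
  "(\<And>p. fst (f p) = fst p) \<Longrightarrow> movable_to_front E u (map f w) = movable_to_front E u w"
  by (induction w) auto

lemma movable_to_front_swap:
  assumes "E (fst p) (fst q)" "E (fst q) (fst p)"
  shows "movable_to_front E u (xs @ [p, q] @ ys) = movable_to_front E u (xs @ [q, p] @ ys)"
proof (induction xs)
  case Nil
  from assms show ?case by (cases "E u (fst p)"; cases "E u (fst q)") auto
qed simp

lemma has_mergeable_pair_append_left: "has_mergeable_pair E ys \<Longrightarrow> has_mergeable_pair E (xs @ ys)"
  by (induction xs) auto

lemma has_mergeable_pair_append:
  "has_mergeable_pair E (xs @ ys) \<Longrightarrow>
   has_mergeable_pair E ys \<or> (\<exists>pre u a post. xs = pre @ (u,a) # post \<and> movable_to_front E u (post @ ys))"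
proof (induction xs)
  case (Cons x xs)
  show ?case
  proof (cases "movable_to_front E (fst x) (xs @ ys)")
    case True
    then show ?thesis
      by (intro disjI2 exI[of _ "[]"] exI[of _ "fst x"] exI[of _ "snd x"] exI[of _ xs]) auto
  next
    case False
    with Cons have "has_mergeable_pair E ys \<or>
        (\<exists>pre u a post. xs = pre @ (u,a) # post \<and> movable_to_front E u (post @ ys))" by auto
    then show ?thesis by (metis append_Cons)
  qed
qed simp

lemma has_mergeable_pair_iff:
  assumes "\<And>u. \<not> E u u"
  shows "has_mergeable_pair E w \<longleftrightarrow>
    (\<exists>xs u a mid b ys. w = xs @ (u,a) # mid @ (u,b) # ys \<and> (\<forall>q\<in>set mid. E u (fst q)))"
proof
  show "has_mergeable_pair E w \<Longrightarrow>
    \<exists>xs u a mid b ys. w = xs @ (u,a) # mid @ (u,b) # ys \<and> (\<forall>q\<in>set mid. E u (fst q))"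
  proof (induction w)
    case (Cons p w)
    show ?case
    proof (cases "movable_to_front E (fst p) w")
      case True
      then obtain mid b ys where "w = mid @ (fst p, b) # ys" "\<forall>q\<in>set mid. E (fst p) (fst q)"
        using movable_to_front_iff assms by metis
      then show ?thesis
        by (intro exI[of _ "[]"] exI[of _ "fst p"] exI[of _ "snd p"] exI[of _ mid] exI[of _ b] exI[of _ ys]) auto
    next
      case False
      with Cons obtain xs u a mid b ys where
        "w = xs @ (u,a) # mid @ (u,b) # ys" "\<forall>q\<in>set mid. E u (fst q)" by auto
      then show ?thesis by (intro exI[of _ "p # xs"]) auto
    qed
  qed simp
next
  assume "\<exists>xs u a mid b ys. w = xs @ (u,a) # mid @ (u,b) # ys \<and> (\<forall>q\<in>set mid. E u (fst q))"
  then obtain xs u a mid b ys where w: "w = xs @ (u,a) # mid @ (u,b) # ys"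
    and mid: "\<forall>q\<in>set mid. E u (fst q)" by blast
  have "movable_to_front E u (mid @ (u,b) # ys)"
    using movable_to_front_iff[of E u] assms mid by blast
  then show "has_mergeable_pair E w"
    using w has_mergeable_pair_append_left[of E "(u,a) # mid @ (u,b) # ys" xs] by simp
qed

lemma has_mergeable_pair_rev:
  assumes "\<And>u. \<not> E u u"
  shows "has_mergeable_pair E (rev w) \<longleftrightarrow> has_mergeable_pair E w"
proof -
  have "has_mergeable_pair E (rev w)" if "has_mergeable_pair E w" for w
  proof -
    from that obtain xs u a mid b ys where
      "w = xs @ (u,a) # mid @ (u,b) # ys" "\<forall>q\<in>set mid. E u (fst q)"
      using has_mergeable_pair_iff assms by metis
    then show ?thesis
      by (intro iffD2[OF has_mergeable_pair_iff[OF assms]]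
          exI[of _ "rev ys"] exI[of _ u] exI[of _ b] exI[of _ "rev mid"] exI[of _ a]
          exI[of _ "rev xs"]) auto
  qed
  from this[of w] this[of "rev w"] show ?thesis by auto
qed

lemma has_mergeable_pair_map:
  "(\<And>p. fst (f p) = fst p) \<Longrightarrow> has_mergeable_pair E (map f w) = has_mergeable_pair E w"
  by (induction w) (auto simp: movable_to_front_map)

lemma has_mergeable_pair_swap:
  assumes "E (fst p) (fst q)" "E (fst q) (fst p)"
  shows "has_mergeable_pair E (xs @ [p, q] @ ys) = has_mergeable_pair E (xs @ [q, p] @ ys)"
proof (induction xs)
  case (Cons x xs)
  then show ?case using movable_to_front_swap[of E p q "fst x" xs ys] assms by simp
qed (use assms in auto)

lemma inv_word_append: "inv_word G (xs @ ys) = inv_word G ys @ inv_word G xs"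
  unfolding inv_word_def by simp

lemma inv_word_Cons: "inv_word G (p # w) = inv_word G w @ [(fst p, inv\<^bsub>G (fst p)\<^esub> snd p)]"
  unfolding inv_word_def by simp

locale graph_product =
  fixes V :: "'v set" and E :: "'v \<Rightarrow> 'v \<Rightarrow> bool" and G :: "'v \<Rightarrow> 'a monoid"
  assumes adj_sym: "\<And>u w. E u w \<Longrightarrow> E w u"
    and adj_irrefl: "\<And>u. \<not> E u u"
    and vertex_group: "\<And>u. u \<in> V \<Longrightarrow> group (G u)"
begin

lemma reduced_imp_normal_word:
  assumes "reduced V E G w"
  shows "normal_word V E G w"
proof -
  have ok: "word_ok V G w" using assms unfolding reduced_def by blast
  have no_one: "snd p \<noteq> \<one>\<^bsub>G (fst p)\<^esub>" if "p \<in> set w" for p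
  proof
    assume one: "snd p = \<one>\<^bsub>G (fst p)\<^esub>"
    obtain xs ys where w: "w = xs @ p # ys" using \<open>p \<in> set w\<close> by (meson split_list)
    have "shorten_step V G w (xs @ ys)" unfolding shorten_step_def using ok w one
      by (intro conjI disjI2 exI[of _ xs] exI[of _ ys] exI[of _ "fst p"]) (auto, metis prod.collapse)
    then show False using assms unfolding reduced_def by blast
  qed
  have "\<not> has_mergeable_pair E w"
  proof
    assume "has_mergeable_pair E w"
    then obtain xs u a mid b ys where w: "w = xs @ (u,a) # mid @ (u,b) # ys"
      and mid: "\<forall>q\<in>set mid. E u (fst q)"
      using has_mergeable_pair_iff adj_irrefl by metis
    have "(swap_step V E G)\<^sup>*\<^sup>* ((xs @ [(u,a)]) @ mid @ (u,b) # ys) ((xs @ [(u,a)]) @ (u,b) # mid @ ys)"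
      by (rule swaps_move_to_front) (use ok w mid adj_sym in auto)
    then have swaps: "(swap_step V E G)\<^sup>*\<^sup>* w (xs @ (u,a) # (u,b) # mid @ ys)" using w by simp
    then have "word_ok V G (xs @ (u,a) # (u,b) # mid @ ys)" using swaps_word_ok ok by blast
    then have "shorten_step V G (xs @ (u,a) # (u,b) # mid @ ys) (xs @ [(u, a \<otimes>\<^bsub>G u\<^esub> b)] @ mid @ ys)"
      unfolding shorten_step_def
      by (intro conjI disjI1 exI[of _ xs] exI[of _ "mid @ ys"] exI[of _ u] exI[of _ a] exI[of _ b]) auto
    then show False using assms swaps unfolding reduced_def by blast
  qed
  with ok no_one show ?thesis unfolding normal_word_def by blast
qed

lemma normal_word_swap:
  assumes "swap_step V E G w w'" "normal_word V E G w"
  shows "normal_word V E G w'"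
proof -
  obtain xs ys u a v b where "E u v" "w = xs @ [(u,a),(v,b)] @ ys" "w' = xs @ [(v,b),(u,a)] @ ys"
    using assms(1) unfolding swap_step_def by blast
  with adj_sym have "has_mergeable_pair E w' = has_mergeable_pair E w" "set w' = set w"
    using has_mergeable_pair_swap[of E "(u,a)" "(v,b)" xs ys] by auto
  with assms(2) show ?thesis unfolding normal_word_def word_ok_def by simp
qed

lemma normal_word_no_shorten_step:
  assumes "normal_word V E G w"
  shows "\<not> shorten_step V G w w'"
proof
  assume "shorten_step V G w w'"
  then consider (merge) xs ys v a b where "w = xs @ [(v,a),(v,b)] @ ys"
    | (delete) xs ys v where "w = xs @ [(v, \<one>\<^bsub>G v\<^esub>)] @ ys"
    unfolding shorten_step_def by blast
  then show False
  proof cases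
    case merge
    then have "has_mergeable_pair E w"
      using has_mergeable_pair_append_left[of E "(v,a) # (v,b) # ys" xs] adj_irrefl by simp
    with assms show False unfolding normal_word_def by blast
  next
    case delete
    with assms show False unfolding normal_word_def by auto
  qed
qed

lemma reduced_iff_normal_word: "reduced V E G w \<longleftrightarrow> normal_word V E G w"
proof
  assume normal: "normal_word V E G w"
  have "normal_word V E G w'" if "(swap_step V E G)\<^sup>*\<^sup>* w w'" for w'
    using that normal by (induction rule: rtranclp_induct) (auto intro: normal_word_swap)
  with normal show "reduced V E G w"
    unfolding reduced_def using normal_word_no_shorten_step normal_word_def by blast
qed (rule reduced_imp_normal_word)

lemma exists_reduced: "word_ok V G w \<Longrightarrow> \<exists>w'. gp_eq V E G w w' \<and> reduced V E G w'"
proof (induction "length w" arbitrary: w rule: less_induct)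
  case less
  show ?case
  proof (cases "reduced V E G w")
    case False
    with less.prems obtain w1 w2 where swaps: "(swap_step V E G)\<^sup>*\<^sup>* w w1"
      and shorten: "shorten_step V G w1 w2"
      unfolding reduced_def by blast
    have "word_ok V G w2 \<and> length w2 < length w1"
      using shorten unfolding shorten_step_def by (auto simp: vertex_group group.is_monoid monoid.m_closed)
    then obtain w3 where "gp_eq V E G w2 w3" "reduced V E G w3"
      using less.hyps swaps_preserve_set_length[OF swaps] by metis
    moreover have "gp_eq V E G w w2"
      using gp_eq_if_swaps[OF swaps] shorten gp_eq_if_elem_step gp_eq_trans
      unfolding elem_step_def by metis
    ultimately show ?thesis using gp_eq_trans by blast
  qed (use gp_eq_refl in blast)
qed

lemma word_ok_inv_word: "word_ok V G w \<Longrightarrow> word_ok V G (inv_word G w)"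
  unfolding word_ok_def inv_word_def using vertex_group group.inv_closed by fastforce

lemma inv_word_inv_word: "word_ok V G w \<Longrightarrow> inv_word G (inv_word G w) = w"
  by (induction w) (auto simp: inv_word_append inv_word_Cons inv_word_def[of G "[]"]
      vertex_group group.inv_inv)

lemma elem_step_inv_word:
  assumes "elem_step V E G w w'"
  shows "elem_step V E G (inv_word G w) (inv_word G w')"
proof -
  consider "swap_step V E G w w'" | "shorten_step V G w w'"
    using assms unfolding elem_step_def by blast
  then show ?thesis
  proof cases
    case 1
    then obtain xs ys u a v b where ok: "word_ok V G w" and "E u v"
      and "w = xs @ [(u,a),(v,b)] @ ys" "w' = xs @ [(v,b),(u,a)] @ ys"
      unfolding swap_step_def by blast
    then have "swap_step V E G (inv_word G w) (inv_word G w')"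
      unfolding swap_step_def using word_ok_inv_word[OF ok] adj_sym
      by (intro conjI exI[of _ "inv_word G ys"] exI[of _ "inv_word G xs"] exI[of _ v]
          exI[of _ "inv\<^bsub>G v\<^esub> b"] exI[of _ u] exI[of _ "inv\<^bsub>G u\<^esub> a"])
        (auto simp: inv_word_append inv_word_Cons)
    then show ?thesis unfolding elem_step_def by simp
  next
    case 2
    then have ok: "word_ok V G w" unfolding shorten_step_def by blast
    from 2 consider
        (merge) xs ys v a b where "w = xs @ [(v,a),(v,b)] @ ys" "w' = xs @ [(v, a \<otimes>\<^bsub>G v\<^esub> b)] @ ys"
      | (delete) xs ys v where "w = xs @ [(v, \<one>\<^bsub>G v\<^esub>)] @ ys" "w' = xs @ ys"
      unfolding shorten_step_def by blast
    then have "shorten_step V G (inv_word G w) (inv_word G w')"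
    proof cases
      case merge
      then have "v \<in> V" "a \<in> carrier (G v)" "b \<in> carrier (G v)" using ok by auto
      then have "inv\<^bsub>G v\<^esub> (a \<otimes>\<^bsub>G v\<^esub> b) = inv\<^bsub>G v\<^esub> b \<otimes>\<^bsub>G v\<^esub> inv\<^bsub>G v\<^esub> a"
        using vertex_group group.inv_mult_group by metis
      with merge show ?thesis
        unfolding shorten_step_def using word_ok_inv_word[OF ok]
        by (intro conjI disjI1 exI[of _ "inv_word G ys"] exI[of _ "inv_word G xs"] exI[of _ v]
            exI[of _ "inv\<^bsub>G v\<^esub> b"] exI[of _ "inv\<^bsub>G v\<^esub> a"]) (auto simp: inv_word_append inv_word_Cons)
    next
      case delete
      then have "v \<in> V" using ok by auto
      then have "inv\<^bsub>G v\<^esub> \<one>\<^bsub>G v\<^esub> = \<one>\<^bsub>G v\<^esub>"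
        using vertex_group group.is_monoid monoid.inv_one by metis
      with delete show ?thesis
        unfolding shorten_step_def using word_ok_inv_word[OF ok]
        by (intro conjI disjI2 exI[of _ "inv_word G ys"] exI[of _ "inv_word G xs"] exI[of _ v])
          (auto simp: inv_word_append inv_word_Cons)
    qed
    then show ?thesis unfolding elem_step_def by simp
  qed
qed

lemma gp_eq_inv_word: "gp_eq V E G w w' \<Longrightarrow> gp_eq V E G (inv_word G w) (inv_word G w')"
  using gp_eq_map[of V E G "inv_word G"] elem_step_inv_word by metis

lemma gp_eq_append_inv_word: "word_ok V G w \<Longrightarrow> gp_eq V E G (w @ inv_word G w) []"
proof (induction w)
  case Nil
  then show ?case by (simp add: inv_word_def gp_eq_refl)
next
  case (Cons p w)
  obtain v a where p: "p = (v,a)" by fastforce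
  have v: "v \<in> V" "a \<in> carrier (G v)" using Cons.prems p by auto
  have ok: "word_ok V G [p]" "word_ok V G [(v, inv\<^bsub>G v\<^esub> a)]"
    using v p vertex_group group.inv_closed by auto
  have "(p # w) @ inv_word G (p # w) = [p] @ (w @ inv_word G w) @ [(v, inv\<^bsub>G v\<^esub> a)]"
    using p by (simp add: inv_word_Cons)
  also have "gp_eq V E G \<dots> ([p] @ [] @ [(v, inv\<^bsub>G v\<^esub> a)])"
    using gp_eq_append_cong[OF ok Cons.IH] Cons.prems by simp
  finally have "gp_eq V E G ((p # w) @ inv_word G (p # w)) [(v,a), (v, inv\<^bsub>G v\<^esub> a)]"
    using p by simp
  moreover have "shorten_step V G [(v,a), (v, inv\<^bsub>G v\<^esub> a)] [(v, \<one>\<^bsub>G v\<^esub>)]"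
    unfolding shorten_step_def using v ok p
    by (intro conjI disjI1 exI[of _ "[]"] exI[of _ "[]"] exI[of _ v] exI[of _ a]
        exI[of _ "inv\<^bsub>G v\<^esub> a"]) (auto simp: vertex_group group.r_inv)
  moreover have "shorten_step V G [(v, \<one>\<^bsub>G v\<^esub>)] []"
    unfolding shorten_step_def using v
    by (intro conjI disjI2 exI[of _ "[]"] exI[of _ "[]"] exI[of _ v])
      (auto simp: vertex_group group.is_monoid)
  ultimately show ?case using gp_eq_trans gp_eq_if_elem_step unfolding elem_step_def by metis
qed

lemma reduced_inv_word:
  assumes "reduced V E G w"
  shows "reduced V E G (inv_word G w)"
proof -
  let ?inv = "\<lambda>p. (fst p, inv\<^bsub>G (fst p)\<^esub> snd p)"
  have normal: "normal_word V E G w" and ok: "word_ok V G w"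
    using assms reduced_iff_normal_word unfolding normal_word_def by auto
  have "has_mergeable_pair E (inv_word G w) \<longleftrightarrow> has_mergeable_pair E w"
    unfolding inv_word_def
    by (simp add: has_mergeable_pair_rev[of E, OF adj_irrefl] has_mergeable_pair_map[of ?inv])
  moreover have "\<forall>p\<in>set (inv_word G w). snd p \<noteq> \<one>\<^bsub>G (fst p)\<^esub>"
    using normal ok unfolding normal_word_def inv_word_def word_ok_def
    by (auto simp: vertex_group group.inv_eq_1_iff)
  ultimately show ?thesis
    using normal word_ok_inv_word[OF ok] reduced_iff_normal_word unfolding normal_word_def by blast
qed

lemma gp_eq_factor:
  assumes "word_ok V G wh" "word_ok V G wg" "word_ok V G x" "gp_eq V E G wh x"
    and "gp_eq V E G (inv_word G wh @ wg) y"
  shows "gp_eq V E G wg (x @ y)"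
proof -
  have ok: "word_ok V G (inv_word G wh @ wg)" using assms(1,2) word_ok_inv_word by simp
  have "gp_eq V E G wg (wh @ inv_word G wh @ wg)"
    using gp_eq_append_cong[OF word_ok_Nil assms(2) gp_eq_append_inv_word[OF assms(1)]]
    by (simp add: gp_eq_sym)
  also have "gp_eq V E G \<dots> (x @ inv_word G wh @ wg)"
    using gp_eq_append_cong[OF word_ok_Nil ok assms(4)] by simp
  also have "gp_eq V E G \<dots> (x @ y)"
    using gp_eq_append_cong[OF assms(3) word_ok_Nil assms(5)] by simp
  finally show ?thesis .
qed

lemma not_reduced_append:
  assumes "reduced V E G x" "reduced V E G y" "\<not> reduced V E G (x @ y)"
  obtains pre u a post mid b ys where "x = pre @ (u,a) # post" "\<forall>q\<in>set post. E u (fst q)"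
    "y = mid @ (u,b) # ys" "\<forall>q\<in>set mid. E u (fst q)"
proof -
  have x: "normal_word V E G x" and y: "normal_word V E G y"
    and "\<not> normal_word V E G (x @ y)"
    using assms by (simp_all add: reduced_iff_normal_word)
  with x y have "has_mergeable_pair E (x @ y)" unfolding normal_word_def by auto
  moreover have "\<not> has_mergeable_pair E y" using y unfolding normal_word_def by blast
  ultimately obtain pre u a post where split: "x = pre @ (u,a) # post"
    and movable: "movable_to_front E u (post @ y)"
    using has_mergeable_pair_append by metis
  have "\<not> movable_to_front E u post"
  proof
    assume "movable_to_front E u post"
    then have "has_mergeable_pair E x"
      using split has_mergeable_pair_append_left[of E "(u,a) # post" pre] by simp
    with x show False unfolding normal_word_def by blast
  qed
  with movable_to_front_append[OF movable]
  have post: "\<forall>q\<in>set post. E u (fst q)" and "movable_to_front E u y" by blast+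
  then obtain mid b ys where "y = mid @ (u,b) # ys" "\<forall>q\<in>set mid. E u (fst q)"
    using movable_to_front_iff[of E u y] adj_irrefl by blast
  with that split post show ?thesis by blast
qed

lemma begins_with_if_movable:
  assumes "reduced V E G y" "gp_eq V E G w y" "y = mid @ (u,b) # ys" "\<forall>q\<in>set mid. E u (fst q)"
  shows "begins_with V E G w u"
proof -
  have "word_ok V G y" using assms(1) unfolding reduced_def by blast
  then have "(swap_step V E G)\<^sup>*\<^sup>* y ((u,b) # mid @ ys)"
    using swaps_move_to_front[of V G "[]" mid "(u,b)" ys E] assms(3,4) adj_sym by auto
  then show ?thesis unfolding begins_with_def
    using reduced_swaps assms(1,2) gp_eq_if_swaps gp_eq_trans by fastforce
qed

lemma begins_with_inv_word_if_movable:
  assumes "reduced V E G x" "gp_eq V E G w x" "x = pre @ (u,a) # post" "\<forall>q\<in>set post. E u (fst q)"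
  shows "begins_with V E G (inv_word G w) u"
proof -
  let ?x = "pre @ post @ [(u,a)]"
  have "reduced V E G ?x" "gp_eq V E G w ?x"
    using reduced_move_to_end[OF assms(1,3,4)] assms(2) gp_eq_trans by blast+
  then have "reduced V E G (inv_word G ?x)" "gp_eq V E G (inv_word G w) (inv_word G ?x)"
    using reduced_inv_word gp_eq_inv_word by blast+
  moreover have "inv_word G ?x \<noteq> [] \<and> fst (hd (inv_word G ?x)) = u"
    unfolding inv_word_def by simp
  ultimately show ?thesis unfolding begins_with_def by blast
qed

lemma reduced_ending_if_inv_word_begins_with:
  assumes "word_ok V G w" "begins_with V E G (inv_word G w) v"
  obtains x where "reduced V E G x" "gp_eq V E G w x" "x \<noteq> []" "fst (last x) = v"
proof -
  obtain y where y: "gp_eq V E G (inv_word G w) y" "reduced V E G y" "y \<noteq> []" "fst (hd y) = v"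
    using assms(2) unfolding begins_with_def by blast
  have "gp_eq V E G w (inv_word G y)"
    using gp_eq_inv_word[OF y(1)] inv_word_inv_word assms(1) by metis
  moreover have "inv_word G y \<noteq> []" "fst (last (inv_word G y)) = v"
    using y(3,4) unfolding inv_word_def by (auto simp: last_rev hd_map)
  ultimately show ?thesis using that reduced_inv_word[OF y(2)] by blast
qed

lemma prefix_ending_in_vertex:
  assumes ok: "word_ok V G wg" "word_ok V G wh"
    and no_link: "\<not> ends_with_link V E G wh v"
    and h_inv: "begins_with V E G (inv_word G wh) v"
    and not_quot: "\<not> begins_with V E G (inv_word G wh @ wg) v"
  shows "\<exists>w m. reduced V E G w \<and> gp_eq V E G wg w \<and> 0 < m \<and> m \<le> length w \<and>
    reduced V E G (take m w) \<and> gp_eq V E G wh (take m w) \<and> fst (w ! (m - 1)) = v"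
proof -
  obtain x where x: "reduced V E G x" "gp_eq V E G wh x" "x \<noteq> []" "fst (last x) = v"
    using reduced_ending_if_inv_word_begins_with[OF ok(2) h_inv] by blast
  obtain y where y: "gp_eq V E G (inv_word G wh @ wg) y" "reduced V E G y"
    using exists_reduced ok word_ok_inv_word by (metis word_ok_append)
  have "reduced V E G (x @ y)"
  proof (rule ccontr)
    assume "\<not> reduced V E G (x @ y)"
    then obtain pre u a post mid b ys where split: "x = pre @ (u,a) # post"
      and post: "\<forall>q\<in>set post. E u (fst q)" and "y = mid @ (u,b) # ys" "\<forall>q\<in>set mid. E u (fst q)"
      using not_reduced_append x(1) y(2) by blast
    then have "begins_with V E G (inv_word G wh @ wg) u" using begins_with_if_movable y(2,1) by blast
    with not_quot have "post \<noteq> []" using split x(4) by auto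
    then have "last post \<in> set post" "fst (last post) = v" using split x(4) by auto
    then have "E v u" using post adj_sym by blast
    then show False using ends_with_link_if_movable[OF x(1,2) split post] no_link by blast
  qed
  moreover have "gp_eq V E G wg (x @ y)"
    using gp_eq_factor ok x(1,2) y(1) unfolding reduced_def by blast
  ultimately show ?thesis using x by (intro exI[of _ "x @ y"] exI[of _ "length x"])
      (auto simp: nth_append last_conv_nth)
qed

lemma prefix_followed_by_vertex:
  assumes ok: "word_ok V G wg" "word_ok V G wh"
    and no_link: "\<not> ends_with_link V E G wh v"
    and quot: "begins_with V E G (inv_word G wh @ wg) v"
    and not_h_inv: "\<not> begins_with V E G (inv_word G wh) v"
  shows "\<exists>w m. reduced V E G w \<and> gp_eq V E G wg w \<and> m < length w \<and>
    reduced V E G (take m w) \<and> gp_eq V E G wh (take m w) \<and> fst (w ! m) = v"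
proof -
  obtain x where x: "gp_eq V E G wh x" "reduced V E G x"
    using exists_reduced ok by blast
  obtain y where y: "gp_eq V E G (inv_word G wh @ wg) y" "reduced V E G y" "y \<noteq> []" "fst (hd y) = v"
    using quot unfolding begins_with_def by blast
  have "reduced V E G (x @ y)"
  proof (rule ccontr)
    assume "\<not> reduced V E G (x @ y)"
    then obtain pre u a post mid b ys where split: "x = pre @ (u,a) # post"
      and post: "\<forall>q\<in>set post. E u (fst q)" and mid: "y = mid @ (u,b) # ys" "\<forall>q\<in>set mid. E u (fst q)"
      using not_reduced_append x(2) y(2) by blast
    show False
    proof (cases "E v u")
      case True
      then show False using ends_with_link_if_movable[OF x(2,1) split post] no_link by blast
    next
      case False
      have "mid = []"
      proof (rule ccontr)
        assume "mid \<noteq> []"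
        then have "hd mid \<in> set mid" "fst (hd mid) = v" using mid(1) y(4) by auto
        with mid(2) False adj_sym show False by blast
      qed
      then have "u = v" using mid(1) y(4) by simp
      then show False using begins_with_inv_word_if_movable[OF x(2,1) split post] not_h_inv by simp
    qed
  qed
  moreover have "gp_eq V E G wg (x @ y)"
    using gp_eq_factor ok x y(1) unfolding reduced_def by blast
  ultimately show ?thesis using x y(3,4) by (intro exI[of _ "x @ y"] exI[of _ "length x"])
      (auto simp: nth_append hd_conv_nth)
qed

end

theorem mainTheorem5:
  fixes V :: "'v set" and E :: "'v \<Rightarrow> 'v \<Rightarrow> bool" and G :: "'v \<Rightarrow> 'a monoid"
    and wg wh :: "('v, 'a) word" and v :: 'v
  assumes "finite V"
    and "\<And>u w. E u w \<Longrightarrow> u \<in> V \<and> w \<in> V"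
    and "\<And>u w. E u w \<Longrightarrow> E w u"
    and "\<And>u. \<not> E u u"
    and "\<And>u. u \<in> V \<Longrightarrow> group (G u)"
    and "v \<in> V"
    and "word_ok V G wg" and "word_ok V G wh"
    and "\<not> ends_with_link V E G wh v"
  shows
    "(begins_with V E G (inv_word G wh) v \<and> \<not> begins_with V E G (inv_word G wh @ wg) v \<longrightarrow>
       (\<exists>w m. reduced V E G w \<and> gp_eq V E G wg w \<and> 0 < m \<and> m \<le> length w \<and>
              reduced V E G (take m w) \<and> gp_eq V E G wh (take m w) \<and> fst (w ! (m - 1)) = v))
   \<and> (begins_with V E G (inv_word G wh @ wg) v \<and> \<not> begins_with V E G (inv_word G wh) v \<longrightarrow>
       (\<exists>w m. reduced V E G w \<and> gp_eq V E G wg w \<and> m < length w \<and>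
              reduced V E G (take m w) \<and> gp_eq V E G wh (take m w) \<and> fst (w ! m) = v))"
proof -
  interpret graph_product V E G
    unfolding graph_product_def using assms(3-5) by blast
  show ?thesis
    using prefix_ending_in_vertex prefix_followed_by_vertex assms(7-9) by blast
qed

end
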